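(* Let $(\mathcal G,\Theta)$ be a Lie triple system with a decomposition $\mathcal G=\mathfrak g_1\oplus\mathfrak g_2$ and $H:\mathfrak g_2\to\mathfrak g_1$ a linear map. Then the linear map $\exp(\hat H)=\mathrm{Id}+\hat H:(\mathcal G,\Theta^H)\to(\mathcal G,\Theta)$, $(x,u)\mapsto(x+H(u),u)$, is an isomorphism of Lie triple systems.
   Context: All vector spaces are over a field of characteristic $0$. A Lie triple system is a vector space with a trilinear bracket satisfying $[x,x,y]=0$, $[x,y,z]+[y,z,x]+[z,x,y]=0$ and $[x,y,[z,w,t]]=[[x,y,z],w,t]+[z,[x,y,w],t]+[z,w,[x,y,t]]$. Cochains: $C^p(\mathcal G,\mathcal G)=\mathrm{Hom}(\otimes^{2p+1}\mathcal G,\mathcal G)$, arguments $(\mathfrak X_1,\dots,\mathfrak X_p,x)$, $\mathfrak X_i=x_i\otimes y_i$; for $P\in C^p,Q\in C^q$, $(P\circ Q)(\mathfrak X_1,\dots,\mathfrak X_{p+q},x)=\sum_{k=1}^p(-1)^{(k-1)q}\sum_{\sigma\in\mathbb S(k-1,q)}(-1)^\sigma P(\mathfrak X_{\sigma(1)},\dots,\mathfrak X_{\sigma(k-1)},Q(\mathfrak X_{\sigma(k)},\dots,\mathfrak X_{\sigma(k+q-1)},x_{k+q})\otimes y_{k+q},\mathfrak X_{k+q+1},\dots,x)+\sum_{k=1}^p(-1)^{(k-1)q}\sum_{\sigma\in\mathbb S(k-1,q)}(-1)^\sigma P(\mathfrak X_{\sigma(1)},\dots,\mathfrak X_{\sigma(k-1)},x_{k+q}\otimes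 Q(\mathfrak X_{\sigma(k)},\dots,\mathfrak X_{\sigma(k+q-1)},y_{k+q}),\mathfrak X_{k+q+1},\dots,x)+\sum_{\sigma\in\mathbb S(p,q)}(-1)^\sigma P(\mathfrak X_{\sigma(1)},\dots,\mathfrak X_{\sigma(p)},Q(\mathfrak X_{\sigma(p+1)},\dots,\mathfrak X_{\sigma(p+q)},x))$ and $[P,Q]_{\mathsf{LTS}}=P\circ Q-(-1)^{pq}Q\circ P$. $\hat H(x,u)=(H(u),0)$, $X_{\hat H}(\cdot)=[\cdot,\hat H]_{\mathsf{LTS}}$, and the twisting is $\Theta^H=\sum_{k\ge0}\frac1{k!}X_{\hat H}^k(\Theta)$ (finite sum), a Lie triple system bracket on $\mathcal G$. *)

theory Defs
  imports Complex_Main "HOL-Library.Product_Plus" "HOL-Combinatorics.Permutations"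
begin

text \<open>The space G = g1 (+) g2 is the
  product type 'a \<times> 'b with componentwise scalar multiplication.\<close>

definition prod_scale :: "('k \<Rightarrow> 'a \<Rightarrow> 'a) \<Rightarrow> ('k \<Rightarrow> 'b \<Rightarrow> 'b) \<Rightarrow> 'k \<Rightarrow> 'a \<times> 'b \<Rightarrow> 'a \<times> 'b" where
  "prod_scale s1 s2 c v = (s1 c (fst v), s2 c (snd v))"

definition trilinear :: "('k::field \<Rightarrow> 'v::ab_group_add \<Rightarrow> 'v) \<Rightarrow> ('v \<Rightarrow> 'v \<Rightarrow> 'v \<Rightarrow> 'v) \<Rightarrow> bool" where
  "trilinear sc T \<longleftrightarrow>
     (\<forall>y z. Vector_Spaces.linear sc sc (\<lambda>x. T x y z)) \<and>
     (\<forall>x z. Vector_Spaces.linear sc sc (\<lambda>y. T x y z)) \<and>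
     (\<forall>x y. Vector_Spaces.linear sc sc (\<lambda>z. T x y z))"

definition is_LTS :: "('k::field \<Rightarrow> 'v::ab_group_add \<Rightarrow> 'v) \<Rightarrow> ('v \<Rightarrow> 'v \<Rightarrow> 'v \<Rightarrow> 'v) \<Rightarrow> bool" where
  "is_LTS sc T \<longleftrightarrow> trilinear sc T \<and>
     (\<forall>x y. T x x y = 0) \<and>
     (\<forall>x y z. T x y z + T y z x + T z x y = 0) \<and>
     (\<forall>x y z w t. T x y (T z w t) = T (T x y z) w t + T z (T x y w) t + T z w (T x y t))"

definition LTS_iso :: "('k::field \<Rightarrow> 'v::ab_group_add \<Rightarrow> 'v) \<Rightarrow> ('v \<Rightarrow> 'v \<Rightarrow> 'v \<Rightarrow> 'v)
    \<Rightarrow> ('v \<Rightarrow> 'v \<Rightarrow> 'v \<Rightarrow> 'v) \<Rightarrow> ('v \<Rightarrow> 'v) \<Rightarrow> bool" where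
  "LTS_iso sc T1 T2 f \<longleftrightarrow> is_LTS sc T1 \<and> is_LTS sc T2 \<and>
     Vector_Spaces.linear sc sc f \<and> bij f \<and>
     (\<forall>x y z. f (T1 x y z) = T2 (f x) (f y) (f z))"

text \<open>Cochains C^p(G,G) are represented as functions on argument lists
  [x1, y1, ..., xp, yp, x] of length 2p+1 (pairs X_i = x_i \<otimes> y_i, 0-indexed below).\<close>

definition shuffles :: "nat \<Rightarrow> nat \<Rightarrow> (nat \<Rightarrow> nat) set" where
  "shuffles n m = {\<sigma>. \<sigma> permutes {..<n+m} \<and>
     (\<forall>i j. i < j \<and> j < n \<longrightarrow> \<sigma> i < \<sigma> j) \<and>
     (\<forall>i j. n \<le> i \<and> i < j \<and> j < n+m \<longrightarrow> \<sigma> i < \<sigma> j)}"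

definition argpair :: "'v list \<Rightarrow> nat \<Rightarrow> 'v \<times> 'v" where
  "argpair xs i = (xs ! (2*i), xs ! (2*i+1))"

definition mk_args :: "('v \<times> 'v) list \<Rightarrow> 'v \<Rightarrow> 'v list" where
  "mk_args ps x = concat (map (\<lambda>(a,b). [a,b]) ps) @ [x]"

definition circ :: "('k::field \<Rightarrow> 'v::ab_group_add \<Rightarrow> 'v) \<Rightarrow> nat \<Rightarrow> nat
    \<Rightarrow> ('v list \<Rightarrow> 'v) \<Rightarrow> ('v list \<Rightarrow> 'v) \<Rightarrow> 'v list \<Rightarrow> 'v" where
  "circ sc p q P Q xs =
    (\<Sum>k\<in>{1..p}. sc ((-1) ^ ((k-1)*q))
       (\<Sum>\<sigma>\<in>shuffles (k-1) q. sc (of_int (sign \<sigma>))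
          (let ps1 = map (\<lambda>i. argpair xs (\<sigma> i)) [0..<k-1];
               bs = map (\<lambda>i. argpair xs (\<sigma> i)) [k-1..<k-1+q];
               cs = map (argpair xs) [k+q..<p+q];
               pk = argpair xs (k+q-1);
               x0 = xs ! (2*(p+q))
           in P (mk_args (ps1 @ [(Q (mk_args bs (fst pk)), snd pk)] @ cs) x0)
            + P (mk_args (ps1 @ [(fst pk, Q (mk_args bs (snd pk)))] @ cs) x0))))
   + (\<Sum>\<sigma>\<in>shuffles p q. sc (of_int (sign \<sigma>))
        (P (mk_args (map (\<lambda>i. argpair xs (\<sigma> i)) [0..<p])
              (Q (mk_args (map (\<lambda>i. argpair xs (\<sigma> i)) [p..<p+q]) (xs ! (2*(p+q))))))))"

definition LTS_bracket :: "('k::field \<Rightarrow> 'v::ab_group_add \<Rightarrow> 'v) \<Rightarrow> nat \<Rightarrow> nat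
    \<Rightarrow> ('v list \<Rightarrow> 'v) \<Rightarrow> ('v list \<Rightarrow> 'v) \<Rightarrow> 'v list \<Rightarrow> 'v" where
  "LTS_bracket sc p q P Q xs = circ sc p q P Q xs - sc ((-1) ^ (p*q)) (circ sc q p Q P xs)"

text \<open>\<^emph>\<open>H-hat\<close> as a 0-cochain: (x,u) \<mapsto> (H u, 0).\<close>
definition hatH :: "('b::zero \<Rightarrow> 'a) \<Rightarrow> ('a \<times> 'b) list \<Rightarrow> 'a \<times> 'b" where
  "hatH H xs = (H (snd (xs ! 0)), 0)"

definition X_hatH :: "('k::field \<Rightarrow> 'a::ab_group_add \<times> 'b::ab_group_add \<Rightarrow> 'a \<times> 'b) \<Rightarrow> ('b \<Rightarrow> 'a)
    \<Rightarrow> nat \<Rightarrow> (('a \<times> 'b) list \<Rightarrow> 'a \<times> 'b) \<Rightarrow> ('a \<times> 'b) list \<Rightarrow> 'a \<times> 'b" where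
  "X_hatH sc H p P = LTS_bracket sc p 0 P (hatH H)"

definition theta_cochain :: "('v \<Rightarrow> 'v \<Rightarrow> 'v \<Rightarrow> 'v) \<Rightarrow> 'v list \<Rightarrow> 'v" where
  "theta_cochain T xs = T (xs ! 0) (xs ! 1) (xs ! 2)"

text \<open>The twisted bracket Theta^H = \<Sum>_k 1/k! X_Hhat^k(Theta): the sum ranges over the
  (finitely many) k for which X_Hhat^k(Theta) is a nonzero 1-cochain.\<close>
definition twist :: "('k::field_char_0 \<Rightarrow> 'a::ab_group_add \<times> 'b::ab_group_add \<Rightarrow> 'a \<times> 'b) \<Rightarrow> ('b \<Rightarrow> 'a)
    \<Rightarrow> ('a \<times> 'b \<Rightarrow> 'a \<times> 'b \<Rightarrow> 'a \<times> 'b \<Rightarrow> 'a \<times> 'b)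
    \<Rightarrow> 'a \<times> 'b \<Rightarrow> 'a \<times> 'b \<Rightarrow> 'a \<times> 'b \<Rightarrow> 'a \<times> 'b" where
  "twist sc H T a b c =
     (\<Sum>k\<in>{k. \<exists>xs. length xs = 3 \<and> ((X_hatH sc H 1) ^^ k) (theta_cochain T) xs \<noteq> 0}.
        sc (inverse (fact k)) (((X_hatH sc H 1) ^^ k) (theta_cochain T) [a, b, c]))"

end

theory Submission
  imports Defs
begin

text \<open>On 1-cochains, \<open>X_hatH\<close> acts as
  \<open>X P (x,y,z) = P(Nx,y,z) + P(x,Ny,z) + P(x,y,Nz) - N P(x,y,z)\<close>, where \<open>N (x,u) = (H u, 0)\<close>
  satisfies \<open>N \<circ> N = 0\<close>. Let \<open>A j\<close> be the sum of the terms of \<open>\<Theta>\<close> with \<open>N\<close> inserted into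
  exactly \<open>j\<close> of the three arguments. Since \<open>N\<close> cannot be inserted twice into the same slot,
  \<open>X (A j) = (j+1) A (j+1) - N (A j)\<close>, so \<open>X\<^sup>k \<Theta> = k! (A k - N (A (k-1)))\<close>, which vanishes for
  \<open>k > 4\<close>. Summing, \<open>\<Theta>\<^sup>H(x,y,z) = (1 - N) \<Theta>((1+N)x, (1+N)y, (1+N)z)\<close>: the twisted bracket is
  \<open>\<Theta>\<close> transported along the linear bijection \<open>1 + N\<close>, whose inverse is \<open>1 - N\<close>.\<close>

text \<open>The action of \<open>X_hatH\<close> on 1-cochains, for an arbitrary map \<open>N\<close> in place of \<open>N (x,u) = (H u, 0)\<close>.\<close>
definition X_tri :: "('v \<Rightarrow> 'v) \<Rightarrow> ('v \<Rightarrow> 'v \<Rightarrow> 'v \<Rightarrow> 'v::ab_group_add) \<Rightarrow> 'v \<Rightarrow> 'v \<Rightarrow> 'v \<Rightarrow> 'v" where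
  "X_tri N P x y z = P (N x) y z + P x (N y) z + P x y (N z) - N (P x y z)"

fun N_insertions :: "('v \<Rightarrow> 'v) \<Rightarrow> ('v \<Rightarrow> 'v \<Rightarrow> 'v \<Rightarrow> 'v::ab_group_add) \<Rightarrow> nat \<Rightarrow> 'v \<Rightarrow> 'v \<Rightarrow> 'v \<Rightarrow> 'v" where
  "N_insertions N T 0 x y z = T x y z"
| "N_insertions N T (Suc 0) x y z = T (N x) y z + T x (N y) z + T x y (N z)"
| "N_insertions N T (Suc (Suc 0)) x y z = T (N x) (N y) z + T (N x) y (N z) + T x (N y) (N z)"
| "N_insertions N T (Suc (Suc (Suc 0))) x y z = T (N x) (N y) (N z)"
| "N_insertions N T (Suc (Suc (Suc (Suc j)))) x y z = 0"

fun twist_term :: "('v \<Rightarrow> 'v) \<Rightarrow> ('v \<Rightarrow> 'v \<Rightarrow> 'v \<Rightarrow> 'v::ab_group_add) \<Rightarrow> nat \<Rightarrow> 'v \<Rightarrow> 'v \<Rightarrow> 'v \<Rightarrow> 'v" where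
  "twist_term N T 0 x y z = T x y z"
| "twist_term N T (Suc k) x y z = N_insertions N T (Suc k) x y z - N (N_insertions N T k x y z)"

locale square_zero_twisting = vector_space scale
  for scale :: "'k::field \<Rightarrow> 'v::ab_group_add \<Rightarrow> 'v" +
  fixes N :: "'v \<Rightarrow> 'v" and T :: "'v \<Rightarrow> 'v \<Rightarrow> 'v \<Rightarrow> 'v"
  assumes linear_N: "Vector_Spaces.linear scale scale N"
    and N_N [simp]: "N (N v) = 0"
    and trilinear_T: "trilinear scale T"
begin

lemma N_add [simp]: "N (v + w) = N v + N w"
  and N_diff [simp]: "N (v - w) = N v - N w"
  and N_zero [simp]: "N 0 = 0"
  and N_scale [simp]: "N (scale c v) = scale c (N v)"
  using linear_N[unfolded linear_iff_module_hom]
  by (simp_all add: module_hom.add module_hom.diff module_hom.zero module_hom.scale)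

lemma linear_T:
  "Vector_Spaces.linear scale scale (\<lambda>x. T x y z)"
  "Vector_Spaces.linear scale scale (\<lambda>y. T x y z)"
  "Vector_Spaces.linear scale scale (\<lambda>z. T x y z)"
  using trilinear_T unfolding trilinear_def by blast+

lemma T_add [simp]:
    "T (a + b) y z = T a y z + T b y z"
    "T x (a + b) z = T x a z + T x b z"
    "T x y (a + b) = T x y a + T x y b"
  and T_zero [simp]: "T 0 y z = 0" "T x 0 z = 0" "T x y 0 = 0"
  using linear_T[unfolded linear_iff_module_hom, THEN module_hom.add]
    linear_T[unfolded linear_iff_module_hom, THEN module_hom.zero]
  by simp_all

lemma X_tri_diff:
  "X_tri N (\<lambda>x y z. P x y z - Q x y z) x y z = X_tri N P x y z - X_tri N Q x y z"
  by (simp add: X_tri_def algebra_simps)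

lemma X_tri_scale:
  "X_tri N (\<lambda>x y z. scale c (P x y z)) = (\<lambda>x y z. scale c (X_tri N P x y z))"
  by (simp add: fun_eq_iff X_tri_def scale_right_distrib scale_right_diff_distrib)

lemma X_tri_comp_N:
  "X_tri N (\<lambda>x y z. N (P x y z)) x y z = N (P (N x) y z + P x (N y) z + P x y (N z))"
  by (simp add: X_tri_def)

lemma scale_of_nat_Suc: "scale (of_nat (Suc n)) v = v + scale (of_nat n) v"
  by (simp add: scale_left_distrib)

lemma N_insertions_Suc:
  "N_insertions N T j (N x) y z + N_insertions N T j x (N y) z + N_insertions N T j x y (N z)
     = scale (of_nat (Suc j)) (N_insertions N T (Suc j) x y z)"
proof -
  consider "j = 0" | "j = 1" | "j = 2" | "j = 3" | i where "j = Suc (Suc (Suc (Suc i)))"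
    by (metis One_nat_def Suc_1 numeral_3_eq_3 not0_implies_Suc)
  then show ?thesis
    by cases (simp_all add: numeral_eq_Suc scale_of_nat_Suc algebra_simps del: of_nat_Suc)
qed

lemma X_tri_twist_term:
  "X_tri N (twist_term N T k) x y z = scale (of_nat (Suc k)) (twist_term N T (Suc k) x y z)"
proof (cases k)
  case 0
  have "twist_term N T 0 = N_insertions N T 0" by (simp add: fun_eq_iff)
  then show ?thesis
    using N_insertions_Suc[of 0] by (simp add: 0 X_tri_def)
next
  case (Suc i)
  have "twist_term N T (Suc i) = (\<lambda>x y z. N_insertions N T (Suc i) x y z - N (N_insertions N T i x y z))"
    by (simp add: fun_eq_iff)
  then have "X_tri N (twist_term N T k) x y z
      = X_tri N (N_insertions N T (Suc i)) x y z - X_tri N (\<lambda>x y z. N (N_insertions N T i x y z)) x y z"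
    by (simp add: Suc X_tri_diff)
  also have "\<dots> = scale (of_nat (Suc (Suc i))) (N_insertions N T (Suc (Suc i)) x y z)
      - N (N_insertions N T (Suc i) x y z) - N (scale (of_nat (Suc i)) (N_insertions N T (Suc i) x y z))"
    by (simp only: X_tri_def[of _ "N_insertions N T (Suc i)"] X_tri_comp_N N_insertions_Suc)
  also have "\<dots> = scale (of_nat (Suc k)) (twist_term N T (Suc k) x y z)"
    by (simp add: Suc scale_right_diff_distrib scale_of_nat_Suc algebra_simps del: of_nat_Suc)
  finally show ?thesis .
qed

lemma X_tri_power: "(X_tri N ^^ k) T = (\<lambda>x y z. scale (of_nat (fact k)) (twist_term N T k x y z))"
proof (induction k)
  case 0
  then show ?case by (simp add: fun_eq_iff)
next
  case (Suc k)
  have "(X_tri N ^^ Suc k) T = X_tri N (\<lambda>x y z. scale (of_nat (fact k)) (twist_term N T k x y z))"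
    by (simp add: Suc.IH)
  also have "\<dots> = (\<lambda>x y z. scale (of_nat (fact (Suc k))) (twist_term N T (Suc k) x y z))"
    by (simp add: fun_eq_iff X_tri_scale X_tri_twist_term algebra_simps del: twist_term.simps)
  finally show ?case .
qed

lemma twist_term_vanishes:
  assumes "4 < k"
  shows "twist_term N T k x y z = 0"
proof -
  obtain i where "k = Suc (4 + i)"
    using assms less_iff_Suc_add by auto
  then show ?thesis by (simp add: numeral_eq_Suc)
qed

lemma sum_twist_terms:
  "(\<Sum>k\<le>4. twist_term N T k x y z)
     = T (x + N x) (y + N y) (z + N z) - N (T (x + N x) (y + N y) (z + N z))"
  by (simp add: numeral_eq_Suc algebra_simps)

lemma linear_id_plus_N: "Vector_Spaces.linear scale scale (\<lambda>v. v + N v)"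
  and linear_id_minus_N: "Vector_Spaces.linear scale scale (\<lambda>v. v - N v)"
  by (simp_all add: Vector_Spaces.linear_iff vector_space_axioms scale_right_distrib
      scale_right_diff_distrib)

end

lemma is_LTS_conjugate:
  assumes T: "is_LTS sc T"
    and f: "Vector_Spaces.linear sc sc f" and g: "Vector_Spaces.linear sc sc g"
    and fg: "\<And>v. f (g v) = v"
  shows "is_LTS sc (\<lambda>x y z. g (T (f x) (f y) (f z)))"
proof -
  have g_add: "g (a + b) = g a + g b" and g_zero: "g 0 = 0" for a b
    using g[unfolded linear_iff_module_hom] by (simp_all add: module_hom.add module_hom.zero)
  have conj: "Vector_Spaces.linear sc sc (g \<circ> L \<circ> f)" if "Vector_Spaces.linear sc sc L" for L
    using Vector_Spaces.linear_compose[OF Vector_Spaces.linear_compose[OF f that] g] by (simp add: o_assoc)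
  have slots: "Vector_Spaces.linear sc sc (\<lambda>x. T x b c)" "Vector_Spaces.linear sc sc (\<lambda>y. T a y c)"
    "Vector_Spaces.linear sc sc (\<lambda>z. T a b z)" for a b c
    using T unfolding is_LTS_def trilinear_def by blast+
  have "trilinear sc (\<lambda>x y z. g (T (f x) (f y) (f z)))"
    using conj[OF slots(1)] conj[OF slots(2)] conj[OF slots(3)]
    unfolding trilinear_def by (simp add: o_def)
  moreover have "g (T (f x) (f x) (f y)) = 0" for x y
    using T g_zero unfolding is_LTS_def by simp
  moreover have "g (T (f x) (f y) (f z)) + g (T (f y) (f z) (f x)) + g (T (f z) (f x) (f y)) = 0"
    for x y z
  proof -
    have "T (f x) (f y) (f z) + T (f y) (f z) (f x) + T (f z) (f x) (f y) = 0"
      using T unfolding is_LTS_def by blast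
    then show ?thesis by (simp only: g_add[symmetric] g_zero)
  qed
  moreover have "g (T (f x) (f y) (f (g (T (f z) (f w) (f t)))))
      = g (T (f (g (T (f x) (f y) (f z)))) (f w) (f t))
        + g (T (f z) (f (g (T (f x) (f y) (f w)))) (f t))
        + g (T (f z) (f w) (f (g (T (f x) (f y) (f t)))))" for x y z w t
  proof -
    have "T (f x) (f y) (T (f z) (f w) (f t))
        = T (T (f x) (f y) (f z)) (f w) (f t) + T (f z) (T (f x) (f y) (f w)) (f t)
          + T (f z) (f w) (T (f x) (f y) (f t))"
      using T unfolding is_LTS_def by blast
    then show ?thesis by (simp only: fg g_add[symmetric])
  qed
  ultimately show ?thesis
    unfolding is_LTS_def by blast
qed

lemma LTS_iso_conjugate:
  assumes T: "is_LTS sc T"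
    and f: "Vector_Spaces.linear sc sc f" and g: "Vector_Spaces.linear sc sc g"
    and gf: "\<And>v. g (f v) = v" and fg: "\<And>v. f (g v) = v"
  shows "LTS_iso sc (\<lambda>x y z. g (T (f x) (f y) (f z))) T f"
proof -
  have "bij f"
    by (rule o_bij[of g]) (simp_all add: fun_eq_iff gf fg)
  then show ?thesis
    unfolding LTS_iso_def using is_LTS_conjugate[OF T f g fg] T f fg by simp
qed

lemma vector_space_prod_scale:
  assumes "vector_space s1" and "vector_space s2"
  shows "vector_space (prod_scale s1 s2)"
  using assms by (simp add: vector_space_def prod_scale_def prod_eq_iff)

lemma linear_hatH:
  assumes "vector_space s1" and H: "Vector_Spaces.linear s2 s1 H"
  shows "Vector_Spaces.linear (prod_scale s1 s2) (prod_scale s1 s2) (\<lambda>v. hatH H [v])"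
proof -
  have "vector_space s2" and "H (u + u') = H u + H u'" and "H (s2 c u) = s1 c (H u)" for u u' c
    using H[unfolded Vector_Spaces.linear_iff] by blast+
  then show ?thesis
    using assms vector_space_prod_scale[of s1 s2] module.scale_zero_right[of s2]
    by (simp add: Vector_Spaces.linear_iff hatH_def prod_scale_def module_iff_vector_space)
qed

lemma square_zero_twisting_hatH:
  assumes "vector_space s1" and "vector_space s2"
    and "trilinear (prod_scale s1 s2) T" and "Vector_Spaces.linear s2 s1 H"
  shows "square_zero_twisting (prod_scale s1 s2) (\<lambda>v. hatH H [v]) T"
proof -
  have "H 0 = 0"
    using assms(4)[unfolded linear_iff_module_hom] by (rule module_hom.zero)
  show ?thesis
  proof (intro square_zero_twisting.intro square_zero_twisting_axioms.intro)
    show "vector_space (prod_scale s1 s2)"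
      using assms(1,2) by (rule vector_space_prod_scale)
    show "Vector_Spaces.linear (prod_scale s1 s2) (prod_scale s1 s2) (\<lambda>v. hatH H [v])"
      using assms(1,4) by (rule linear_hatH)
    show "hatH H [hatH H [v]] = 0" for v
      using \<open>H 0 = 0\<close> by (simp add: hatH_def zero_prod_def)
  qed fact
qed

lemma shuffles_0_0: "shuffles 0 0 = {id}"
  by (auto simp: shuffles_def)

lemma shuffles_1_0: "shuffles 1 0 = {id}"
  and shuffles_0_1: "shuffles 0 1 = {id}"
  by (auto simp: shuffles_def lessThan_Suc)

lemma X_hatH_one:
  assumes "\<And>v. sc 1 v = v"
  shows "X_hatH sc H 1 P xs = X_tri (\<lambda>v. hatH H [v]) (\<lambda>x y z. P [x, y, z]) (xs!0) (xs!1) (xs!2)"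
  using assms shuffles_0_0 shuffles_1_0 shuffles_0_1
  by (simp add: X_hatH_def LTS_bracket_def circ_def X_tri_def argpair_def mk_args_def
      numeral_eq_Suc Let_def)

lemma X_hatH_power:
  assumes "\<And>v. sc 1 v = v"
  shows "((X_hatH sc H 1) ^^ k) (theta_cochain T) xs
    = (X_tri (\<lambda>v. hatH H [v]) ^^ k) T (xs!0) (xs!1) (xs!2)"
proof (induction k arbitrary: xs)
  case 0
  then show ?case by (simp add: theta_cochain_def)
next
  case (Suc k)
  then show ?case
    by (simp only: funpow.simps comp_apply X_hatH_one[of sc, OF assms] Suc.IH) simp
qed

lemma twist_eq_conjugate:
  fixes s1 :: "'k::field_char_0 \<Rightarrow> 'a::ab_group_add \<Rightarrow> 'a" and s2 :: "'k \<Rightarrow> 'b::ab_group_add \<Rightarrow> 'b"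
  assumes "square_zero_twisting (prod_scale s1 s2) (\<lambda>v. hatH H [v]) T"
  shows "twist (prod_scale s1 s2) H T x y z
    = T (x + hatH H [x]) (y + hatH H [y]) (z + hatH H [z])
      - hatH H [T (x + hatH H [x]) (y + hatH H [y]) (z + hatH H [z])]"
proof -
  interpret square_zero_twisting "prod_scale s1 s2" "\<lambda>v. hatH H [v]" T by fact
  let ?X = "X_hatH (prod_scale s1 s2) H 1"
  let ?S = "{k. \<exists>xs. length xs = 3 \<and> (?X ^^ k) (theta_cochain T) xs \<noteq> 0}"
  let ?F = "\<lambda>k. prod_scale s1 s2 (inverse (fact k)) ((?X ^^ k) (theta_cochain T) [x, y, z])"
  have X: "(?X ^^ k) (theta_cochain T) xs
      = prod_scale s1 s2 (of_nat (fact k)) (twist_term (\<lambda>v. hatH H [v]) T k (xs!0) (xs!1) (xs!2))"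
    for k xs
    using X_hatH_power[of "prod_scale s1 s2", OF scale_one] X_tri_power by simp
  have "?S \<subseteq> {..4}"
  proof
    fix k assume "k \<in> ?S"
    then obtain xs where "(?X ^^ k) (theta_cochain T) xs \<noteq> 0" by blast
    then show "k \<in> {..4}"
      unfolding X using twist_term_vanishes by (metis atMost_iff not_le scale_zero_right)
  qed
  moreover have "?F k = 0" if "k \<notin> ?S" for k
    using that by simp
  ultimately have "sum ?F ?S = sum ?F {..4}"
    by (intro sum.mono_neutral_left) auto
  moreover have "?F k = twist_term (\<lambda>v. hatH H [v]) T k x y z" for k
    unfolding X by (simp add: of_nat_fact)
  ultimately show ?thesis
    using sum_twist_terms by (simp add: twist_def)
qed

theorem corollary4p4:
  fixes s1 :: "'k::field_char_0 \<Rightarrow> 'a::ab_group_add \<Rightarrow> 'a"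
    and s2 :: "'k \<Rightarrow> 'b::ab_group_add \<Rightarrow> 'b"
    and T :: "'a \<times> 'b \<Rightarrow> 'a \<times> 'b \<Rightarrow> 'a \<times> 'b \<Rightarrow> 'a \<times> 'b"
    and H :: "'b \<Rightarrow> 'a"
  assumes "vector_space s1" and "vector_space s2"
    and "is_LTS (prod_scale s1 s2) T"
    and "Vector_Spaces.linear s2 s1 H"
  shows "LTS_iso (prod_scale s1 s2) (twist (prod_scale s1 s2) H T) T
           (\<lambda>(x, u). (x + H u, u))"
proof -
  let ?N = "\<lambda>v. hatH H [v]"
  have twisting: "square_zero_twisting (prod_scale s1 s2) ?N T"
    using assms by (intro square_zero_twisting_hatH) (simp_all add: is_LTS_def)
  then interpret square_zero_twisting "prod_scale s1 s2" ?N T .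
  have "twist (prod_scale s1 s2) H T = (\<lambda>x y z. T (x + ?N x) (y + ?N y) (z + ?N z)
      - ?N (T (x + ?N x) (y + ?N y) (z + ?N z)))"
    by (simp add: fun_eq_iff twist_eq_conjugate[OF twisting])
  moreover have "(\<lambda>(x, u). (x + H u, u)) = (\<lambda>v. v + ?N v)"
    by (auto simp: fun_eq_iff hatH_def)
  ultimately show ?thesis
    using LTS_iso_conjugate[OF assms(3) linear_id_plus_N linear_id_minus_N] by simp
qed

end
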